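(* For every integer $k\ge 1$ and real $\zeta\in(0,1)$ there exists $\alpha_0=\alpha_0(k,\zeta)>0$ such that the following holds for every $\alpha\in(0,\alpha_0)$ and all positive integers $n,t$ with $n\ge 8k^4$, $t\ge n/(2k^3)$ and $t+1<(1-\zeta)n/k$. Let $X=\{x_1,\ldots,x_{t+1}\}$ be disjoint from $[n]$, and let $H$ be a $(1,k)$-partite $(k+1)$-graph with partition classes $X,[n]$. If every vertex of $H$ is $\alpha$-good with respect to $\mathcal{F}_{t+1}(k,n;t)$, then $\nu(H)\ge t$, and if $\nu(H)=t$ then $H$ is a subgraph of $\mathcal{F}_{t+1}(k,n;t)$ (i.e. every edge of $H$ meets $[t]$).
   Context: A $(k+1)$-graph is a pair $(V,E)$ with $E$ a family of $(k+1)$-subsets of $V$; $\nu(H)$ is the maximum number of pairwise disjoint edges of $H$. Given disjoint sets $Q,V$, a $(k+1)$-graph with vertex set $Q\cup V$ is $(1,k)$-partite with partition classes $Q,V$ if every edge $e$ satisfies $|e\cap Q|=1$ and $|e\cap V|=k$. $\mathcal{F}_{t+1}(k,n;t)$ denotes the $(1,k)$-partite $(k+1)$-graph with partition classes $X=\{x_1,\ldots,x_{t+1}\}$ and $[n]$ whose edges are all sets $\{x_i\}\cup e$ with $i\in[t+1]$, $e\in\binom{[n]}{k}$ and $e\cap[t]\ne\emptyset$. For a $(k+1)$-graph $G$ and a vertex $v$, $N_G(v)=\{S: |S|=k,\ S\cup\{v\}\in E(G)\}$. For $0<\alpha<1$, a vertex $v$ of $H$ (where $H$ has the same vertex set as $\mathcal{F}_{t+1}(k,n;t)$)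 is $\alpha$-good with respect to $\mathcal{F}_{t+1}(k,n;t)$ if $|N_{\mathcal{F}_{t+1}(k,n;t)}(v)\setminus N_H(v)|\le\alpha n^k$. *)

theory Defs
  imports Main Complex_Main
begin

text \<open>Vertices: X = {Inl 1, ..., Inl (t+1)} (x_i is Inl i), and [n] = {Inr 1, ..., Inr n}.\<close>

type_synonym vert = "nat + nat"

definition Xset :: "nat \<Rightarrow> vert set" where
  "Xset t = Inl ` {1..t+1}"

definition Nset :: "nat \<Rightarrow> vert set" where
  "Nset n = Inr ` {1..n}"

definition one_k_partite :: "nat \<Rightarrow> vert set \<Rightarrow> vert set \<Rightarrow> vert set set \<Rightarrow> bool" where
  "one_k_partite k Q V E \<longleftrightarrow> Q \<inter> V = {} \<and>
     (\<forall>e\<in>E. e \<subseteq> Q \<union> V \<and> card (e \<inter> Q) = 1 \<and> card (e \<inter> V) = k \<and> finite e)"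

definition F_edges :: "nat \<Rightarrow> nat \<Rightarrow> nat \<Rightarrow> vert set set" where
  "F_edges k n t = {insert (Inl i) e | i e. i \<in> {1..t+1} \<and> e \<subseteq> Nset n \<and> card e = k
                     \<and> e \<inter> Inr ` {1..t} \<noteq> {}}"

definition nbhd :: "nat \<Rightarrow> vert set set \<Rightarrow> vert \<Rightarrow> vert set set" where
  "nbhd k E v = {S. card S = k \<and> finite S \<and> v \<notin> S \<and> insert v S \<in> E}"

definition alpha_good :: "real \<Rightarrow> nat \<Rightarrow> nat \<Rightarrow> nat \<Rightarrow> vert set set \<Rightarrow> vert \<Rightarrow> bool" where
  "alpha_good \<alpha> k n t E v \<longleftrightarrow>
     real (card (nbhd k (F_edges k n t) v - nbhd k E v)) \<le> \<alpha> * real n ^ k"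

definition matching :: "vert set set \<Rightarrow> vert set set \<Rightarrow> bool" where
  "matching E M \<longleftrightarrow> M \<subseteq> E \<and> finite M \<and> (\<forall>e\<in>M. \<forall>f\<in>M. e \<noteq> f \<longrightarrow> e \<inter> f = {})"

definition matching_number :: "vert set set \<Rightarrow> nat" where
  "matching_number E = Max {card M | M. matching E M}"

end

theory Submission
  imports Defs
begin

text \<open>
  Call a pair of vertices \<open>j \<in> [t]\<close> and \<open>x\<^sub>i\<close> light if only few \<open>(k-1)\<close>-sets
  \<open>T \<subseteq> [n] - [t]\<close> fail to complete \<open>{x\<^sub>i, j} \<union> T\<close> to an edge of \<open>H\<close>. Since \<open>j\<close> and
  \<open>x\<^sub>i\<close> are \<open>\<alpha>\<close>-good, the missing completions at any vertex number at most \<open>\<alpha> n\<^sup>k\<close>, so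
  by Markov's inequality every vertex lies in only \<open>O(\<alpha> n)\<close> heavy pairs. An exchange
  argument then matches \<open>[t]\<close> injectively into any \<open>t\<close> vertices of \<open>X\<close> along light pairs,
  and the light pairs can be completed greedily by pairwise disjoint \<open>(k-1)\<close>-sets, because
  \<open>[n] - [t]\<close> still contains far more \<open>(k-1)\<close>-sets than are missing after removing
  the earlier choices and \<open>k\<close> further vertices. Hence \<open>H\<close> has \<open>t\<close> disjoint edges avoiding
  any prescribed \<open>x\<^sub>a\<close> and any \<open>k\<close> vertices of \<open>[n] - [t]\<close>; this gives \<open>\<nu>(H) \<ge> t\<close>,
  and an edge of \<open>H\<close> missing \<open>[t]\<close> would extend such a matching to \<open>t + 1\<close> edges.
\<close>

lemma card_gt_le_sum_div:
  fixes w :: "'b \<Rightarrow> nat" and S \<gamma> :: real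
  assumes "finite B" "(\<Sum>b\<in>B. real (w b)) \<le> S" "\<gamma> > 0"
  shows "real (card {b\<in>B. real (w b) > \<gamma>}) \<le> S / \<gamma>"
proof -
  have "real (card {b\<in>B. real (w b) > \<gamma>}) * \<gamma> = (\<Sum>b\<in>{b\<in>B. real (w b) > \<gamma>}. \<gamma>)"
    by simp
  also have "\<dots> \<le> (\<Sum>b\<in>{b\<in>B. real (w b) > \<gamma>}. real (w b))"
    by (intro sum_mono) auto
  also have "\<dots> \<le> (\<Sum>b\<in>B. real (w b))"
    using assms(1) by (intro sum_mono2) auto
  finally show ?thesis
    using assms by (simp add: pos_le_divide_eq)
qed

lemma inj_on_update_swap:
  assumes "inj_on f A" "a \<notin> A" "a' \<in> A" "b \<notin> f ` A"
  shows "inj_on (f(a := f a', a' := b)) (insert a A)"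
proof -
  let ?g = "f(a' := b)"
  have "a \<noteq> a'" using assms(2,3) by blast
  have g: "inj_on ?g A" "f a' \<notin> ?g ` A"
    using assms(1,3,4) by (auto simp: inj_on_def image_iff)
  have "inj_on (?g(a := f a')) A" "(?g(a := f a')) ` A = ?g ` A"
    using assms(2) by (auto intro: inj_on_cong[THEN iffD2, OF _ g(1)])
  then have "inj_on (?g(a := f a')) (insert a A)"
    using assms(2) g(2) by simp
  with \<open>a \<noteq> a'\<close> show ?thesis by (simp add: fun_upd_twist)
qed

text \<open>
  If every vertex of \<open>B - f ` A\<close> is bad for \<open>a\<close>, then \<open>A\<close> fills all but \<open>D\<close> of \<open>B\<close>,
  which is more than the at most \<open>2 D\<close> vertices of \<open>A\<close> that are bad for \<open>a\<close> (via \<open>f\<close>)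
  or for a fixed free vertex \<open>b0\<close>.
\<close>
lemma exists_swap_partner:
  fixes G :: "'a \<Rightarrow> 'b \<Rightarrow> bool" and D :: real
  assumes f: "inj_on f A" "f ` A \<subseteq> B"
    and "finite A" "finite B" "card A < card B" "3 * D < real (card B)"
    and bad_a: "real (card {b\<in>B. \<not> G a b}) \<le> D"
    and bad_B: "\<forall>b\<in>B. real (card {x\<in>A. \<not> G x b}) \<le> D"
    and no_free: "\<forall>b\<in>B - f ` A. \<not> G a b"
  obtains a' b0 where "a' \<in> A" "b0 \<in> B" "b0 \<notin> f ` A" "G a (f a')" "G a' b0"
proof -
  have free: "card (B - f ` A) = card B - card A"
    using f \<open>finite A\<close> by (simp add: card_Diff_subset card_image)
  have "card (B - f ` A) \<le> card {b\<in>B. \<not> G a b}"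
    using no_free \<open>finite B\<close> by (intro card_mono) auto
  then have A_large: "real (card B) - real (card A) \<le> D"
    using free bad_a \<open>card A < card B\<close> by linarith
  obtain b0 where b0: "b0 \<in> B" "b0 \<notin> f ` A"
    using free \<open>card A < card B\<close> by (metis Diff_iff card.empty ex_in_conv zero_less_diff less_irrefl)
  define Bad where "Bad = {x\<in>A. \<not> G a (f x)} \<union> {x\<in>A. \<not> G x b0}"
  have "card {x\<in>A. \<not> G a (f x)} = card (f ` {x\<in>A. \<not> G a (f x)})"
    using inj_on_subset[OF f(1)] by (simp add: card_image)
  also have "\<dots> \<le> card {b\<in>B. \<not> G a b}"
    using f(2) \<open>finite B\<close> by (intro card_mono) auto
  finally have "card Bad \<le> card {b\<in>B. \<not> G a b} + card {x\<in>A. \<not> G x b0}"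
    unfolding Bad_def by (meson add_le_mono1 card_Un_le order_trans)
  moreover have "real (card {x\<in>A. \<not> G x b0}) \<le> D"
    using bad_B b0(1) by blast
  ultimately have Bad_small: "real (card Bad) < real (card A)"
    using bad_a A_large \<open>3 * D < real (card B)\<close> by linarith
  have "\<not> A \<subseteq> Bad"
  proof
    assume "A \<subseteq> Bad"
    then have "card A \<le> card Bad"
      using \<open>finite A\<close> by (intro card_mono) (auto simp: Bad_def)
    with Bad_small show False by simp
  qed
  then obtain a' where "a' \<in> A" "G a (f a')" "G a' b0"
    by (auto simp: Bad_def)
  with b0 show thesis
    using that by blast
qed

lemma extend_good_injection:
  fixes G :: "'a \<Rightarrow> 'b \<Rightarrow> bool" and D :: real
  assumes f: "inj_on f A" "f ` A \<subseteq> B" "\<forall>x\<in>A. G x (f x)"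
    and "finite A" "finite B" "a \<notin> A" "card A < card B" "3 * D < real (card B)"
    and bad_a: "real (card {b\<in>B. \<not> G a b}) \<le> D"
    and bad_B: "\<forall>b\<in>B. real (card {x\<in>A. \<not> G x b}) \<le> D"
  shows "\<exists>h. inj_on h (insert a A) \<and> h ` insert a A \<subseteq> B \<and> (\<forall>x\<in>insert a A. G x (h x))"
proof (cases "\<exists>b\<in>B - f ` A. G a b")
  case True
  then obtain b where "b \<in> B" "b \<notin> f ` A" "G a b" by blast
  then show ?thesis
    using f \<open>a \<notin> A\<close> by (intro exI[of _ "f(a := b)"]) (auto simp: inj_on_fun_updI)
next
  case False
  then have "\<forall>b\<in>B - f ` A. \<not> G a b"
    by blast
  then obtain a' b0 where a': "a' \<in> A" and b0: "b0 \<in> B" "b0 \<notin> f ` A" and "G a (f a')" "G a' b0"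
    by (rule exists_swap_partner[OF f(1,2) assms(4,5,7,8) bad_a bad_B])
  show ?thesis
  proof (intro exI conjI)
    show "inj_on (f(a := f a', a' := b0)) (insert a A)"
      by (rule inj_on_update_swap) (use f(1) \<open>a \<notin> A\<close> a' b0(2) in auto)
    show "(f(a := f a', a' := b0)) ` insert a A \<subseteq> B"
      using f(2) b0(1) a' by auto
    show "\<forall>x\<in>insert a A. G x ((f(a := f a', a' := b0)) x)"
      using f(3) a' \<open>G a (f a')\<close> \<open>G a' b0\<close> \<open>a \<notin> A\<close> by auto
  qed
qed

lemma exists_inj_good_pairs:
  fixes G :: "'a \<Rightarrow> 'b \<Rightarrow> bool" and D :: real
  assumes "finite A" "finite B" "card A \<le> card B" "3 * D < real (card B)"
    and bad_A: "\<forall>a\<in>A. real (card {b\<in>B. \<not> G a b}) \<le> D"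
    and bad_B: "\<forall>b\<in>B. real (card {a\<in>A. \<not> G a b}) \<le> D"
  shows "\<exists>f. inj_on f A \<and> f ` A \<subseteq> B \<and> (\<forall>a\<in>A. G a (f a))"
proof -
  have "\<exists>f. inj_on f A' \<and> f ` A' \<subseteq> B \<and> (\<forall>a\<in>A'. G a (f a))" if "A' \<subseteq> A" for A'
    using finite_subset[OF that \<open>finite A\<close>] that
  proof (induction A' rule: finite_induct)
    case empty
    show ?case by simp
  next
    case (insert a A')
    then obtain f where f: "inj_on f A'" "f ` A' \<subseteq> B" "\<forall>x\<in>A'. G x (f x)" by blast
    have "card (insert a A') \<le> card A"
      using insert.prems \<open>finite A\<close> by (rule card_mono[rotated])
    then have "card A' < card B"
      using insert.hyps \<open>card A \<le> card B\<close> by simp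
    moreover have "\<forall>b\<in>B. real (card {x\<in>A'. \<not> G x b}) \<le> D"
    proof
      fix b assume "b \<in> B"
      have "card {x\<in>A'. \<not> G x b} \<le> card {x\<in>A. \<not> G x b}"
        using insert.prems \<open>finite A\<close> by (intro card_mono) auto
      then show "real (card {x\<in>A'. \<not> G x b}) \<le> D"
        using bad_B \<open>b \<in> B\<close> by (meson of_nat_le_iff order_trans)
    qed
    moreover have "real (card {b\<in>B. \<not> G a b}) \<le> D"
      using bad_A insert.prems by blast
    ultimately show ?case
      using extend_good_injection[of f A' B G, OF f] insert.hyps \<open>finite B\<close> \<open>3 * D < real (card B)\<close> by blast
  qed
  then show ?thesis by blast
qed

lemma exists_inj_light_pairs:
  fixes w :: "'a \<Rightarrow> 'b \<Rightarrow> nat" and S \<gamma> :: real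
  assumes "finite A" "finite B" "card A \<le> card B" "\<gamma> > 0" "3 * (S / \<gamma>) < real (card B)"
    and rows: "\<forall>a\<in>A. (\<Sum>b\<in>B. real (w a b)) \<le> S"
    and cols: "\<forall>b\<in>B. (\<Sum>a\<in>A. real (w a b)) \<le> S"
  shows "\<exists>f. inj_on f A \<and> f ` A \<subseteq> B \<and> (\<forall>a\<in>A. real (w a (f a)) \<le> \<gamma>)"
proof (rule exists_inj_good_pairs[where D = "S / \<gamma>"])
  show "\<forall>a\<in>A. real (card {b\<in>B. \<not> real (w a b) \<le> \<gamma>}) \<le> S / \<gamma>"
    using card_gt_le_sum_div[OF \<open>finite B\<close> _ \<open>\<gamma> > 0\<close>] rows by (simp add: not_le)
  show "\<forall>b\<in>B. real (card {a\<in>A. \<not> real (w a b) \<le> \<gamma>}) \<le> S / \<gamma>"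
    using card_gt_le_sum_div[OF \<open>finite A\<close> _ \<open>\<gamma> > 0\<close>] cols by (simp add: not_le)
qed (use assms in auto)

lemma exists_disjoint_choice:
  fixes Q :: "'a \<Rightarrow> 'v set \<Rightarrow> bool"
  assumes "finite A"
    and room: "\<forall>a\<in>A. \<forall>U. U \<subseteq> P \<and> card U \<le> r * (card A - 1) \<longrightarrow> (\<exists>T. T \<subseteq> P - U \<and> card T = r \<and> Q a T)"
  shows "\<exists>g. (\<forall>a\<in>A. g a \<subseteq> P \<and> card (g a) = r \<and> Q a (g a)) \<and>
             (\<forall>a\<in>A. \<forall>b\<in>A. a \<noteq> b \<longrightarrow> g a \<inter> g b = {})"
proof -
  have "\<exists>g. (\<forall>a\<in>A'. g a \<subseteq> P \<and> card (g a) = r \<and> Q a (g a)) \<and>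
             (\<forall>a\<in>A'. \<forall>b\<in>A'. a \<noteq> b \<longrightarrow> g a \<inter> g b = {})" if "A' \<subseteq> A" for A'
    using finite_subset[OF that \<open>finite A\<close>] that
  proof (induction A' rule: finite_induct)
    case empty
    show ?case by simp
  next
    case (insert a A')
    then obtain g where g: "\<forall>x\<in>A'. g x \<subseteq> P \<and> card (g x) = r \<and> Q x (g x)"
       "\<forall>x\<in>A'. \<forall>y\<in>A'. x \<noteq> y \<longrightarrow> g x \<inter> g y = {}" by auto
    define U where "U = (\<Union>x\<in>A'. g x)"
    have "U \<subseteq> P"
      using g(1) by (auto simp: U_def)
    have "card (insert a A') \<le> card A"
      using insert.prems \<open>finite A\<close> by (rule card_mono[rotated])
    then have "card A' \<le> card A - 1"
      using insert.hyps by simp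
    have "card U \<le> (\<Sum>x\<in>A'. card (g x))"
      unfolding U_def using insert.hyps(1) by (rule card_UN_le)
    also have "\<dots> = r * card A'"
      using g(1) by simp
    also have "\<dots> \<le> r * (card A - 1)"
      using \<open>card A' \<le> card A - 1\<close> by simp
    finally obtain T where T: "T \<subseteq> P - U" "card T = r" "Q a T"
      using room insert.prems \<open>U \<subseteq> P\<close> by blast
    have "T \<inter> g x = {}" if "x \<in> A'" for x
      using T(1) that by (auto simp: U_def)
    then show ?case
      using g T insert.hyps(2) by (intro exI[of _ "g(a := T)"]) (auto simp: Int_commute)
  qed
  then show ?thesis by blast
qed

lemma binomial_ge_power_div_Suc:
  assumes "0 \<le> x" "x \<le> real m" "r \<le> m"
  shows "(x / real (Suc r)) ^ r \<le> real (m choose r)"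
proof (cases "r = 0")
  case False
  have "x / real (Suc r) \<le> real m / real r"
    using assms(1,2) False by (intro frac_le) auto
  then have "(x / real (Suc r)) ^ r \<le> (real m / real r) ^ r"
    using assms(1) by (intro power_mono) auto
  also have "\<dots> \<le> real (m choose r)"
    using binomial_ge_n_over_k_pow_k[OF assms(3)] by simp
  finally show ?thesis .
qed simp

lemma insert_eq_insertD:
  assumes "insert x A = insert y B" "x \<notin> A" "x \<notin> B"
  shows "x = y \<and> A = B"
proof -
  have "x = y"
    using assms(1,3) by (metis insertE insertI1)
  with assms show ?thesis
    using insert_ident by metis
qed

lemma card_le_matching_number:
  assumes "finite E" "matching E M"
  shows "card M \<le> matching_number E"
proof -
  have "{card M | M. matching E M} \<subseteq> card ` Pow E"
    by (auto simp: matching_def)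
  then have "finite {card M | M. matching E M}"
    by (rule finite_subset) (simp add: assms(1))
  then show ?thesis
    unfolding matching_number_def using assms(2) by (intro Max_ge) auto
qed

lemma matching_insert:
  assumes "matching E M" "e \<in> E" "\<forall>e'\<in>M. e \<inter> e' = {}"
  shows "matching E (insert e M)"
  using assms by (auto simp: matching_def Int_commute)

lemma finite_edges_one_k_partite:
  assumes "one_k_partite k Q V E" "finite (Q \<union> V)"
  shows "finite E"
proof (rule finite_subset)
  show "E \<subseteq> Pow (Q \<union> V)"
    using assms(1) by (auto simp: one_k_partite_def)
qed (use assms(2) in simp)

lemma one_k_partite_edgeE:
  assumes "one_k_partite k (Xset t) (Nset n) E" "e \<in> E"
  obtains a S where "a \<in> {1..t+1}" "e = insert (Inl a) S" "S \<subseteq> Nset n" "card S = k"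
proof -
  have e: "e \<subseteq> Xset t \<union> Nset n" "card (e \<inter> Xset t) = 1" "card (e \<inter> Nset n) = k"
    using assms unfolding one_k_partite_def by auto
  obtain x where x: "e \<inter> Xset t = {x}"
    using e(2) by (rule card_1_singletonE)
  then have "x \<in> Xset t"
    by blast
  then obtain a where "a \<in> {1..t+1}" "x = Inl a"
    by (auto simp: Xset_def)
  with x have "a \<in> {1..t+1}" "e \<inter> Xset t = {Inl a}"
    by simp_all
  moreover have "e = (e \<inter> Xset t) \<union> (e \<inter> Nset n)"
    using e(1) by blast
  ultimately show thesis
    using that e(3) by (metis Int_lower2 insert_is_Un)
qed

definition Nset_above :: "nat \<Rightarrow> nat \<Rightarrow> vert set" where
  "Nset_above t n = Inr ` {t+1..n}"

definition missing_completions :: "nat \<Rightarrow> nat \<Rightarrow> nat \<Rightarrow> vert set set \<Rightarrow> nat \<Rightarrow> nat \<Rightarrow> vert set set" where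
  "missing_completions k n t E i j =
     {T. T \<subseteq> Nset_above t n \<and> card T = k - 1 \<and> insert (Inl i) (insert (Inr j) T) \<notin> E}"

lemma finite_Nset_above [simp]: "finite (Nset_above t n)"
  by (simp add: Nset_above_def)

lemma card_Nset_above [simp]: "card (Nset_above t n) = n - t"
  by (simp add: Nset_above_def card_image)

lemma finite_missing_completions [simp]: "finite (missing_completions k n t E i j)"
  by (rule finite_subset[of _ "Pow (Nset_above t n)"]) (auto simp: missing_completions_def)

lemma finite_nbhd_F_edges: "finite (nbhd k (F_edges k n t) v)"
proof (rule finite_subset)
  show "nbhd k (F_edges k n t) v \<subseteq> Pow (Xset t \<union> Nset n)"
    by (auto simp: nbhd_def F_edges_def Xset_def)
  show "finite (Pow (Xset t \<union> Nset n))"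
    by (simp add: Xset_def Nset_def)
qed

lemma completion_in_F_edges:
  assumes "k \<ge> 1" "i \<in> {1..t+1}" "j \<in> {1..t}" "t \<le> n" "T \<subseteq> Nset_above t n" "card T = k - 1"
  shows "insert (Inl i) (insert (Inr j) T) \<in> F_edges k n t"
proof -
  have "finite T"
    using assms(5) finite_Nset_above by (rule finite_subset)
  have "Inr j \<notin> T"
    using assms(3,5) by (auto simp: Nset_above_def)
  with \<open>finite T\<close> have "card (insert (Inr j) T) = k"
    using assms(1,6) by simp
  moreover have "insert (Inr j) T \<subseteq> Nset n"
    using assms(3-5) by (auto simp: Nset_def Nset_above_def)
  moreover have "Inr j \<in> insert (Inr j) T \<inter> Inr ` {1..t}"
    using assms(3) by simp
  ultimately show ?thesis
    unfolding F_edges_def using assms(2) by blast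
qed

lemma sum_card_missing_completions_Inr:
  assumes "k \<ge> 1" "j \<in> {1..t}" "t \<le> n"
  shows "(\<Sum>i\<in>{1..t+1}. card (missing_completions k n t E i j))
           \<le> card (nbhd k (F_edges k n t) (Inr j) - nbhd k E (Inr j))"
proof -
  let ?Sg = "SIGMA i:{1..t+1}. missing_completions k n t E i j"
  let ?\<phi> = "\<lambda>(i, T). insert (Inl i) T"
  have sub: "?\<phi> ` ?Sg \<subseteq> nbhd k (F_edges k n t) (Inr j) - nbhd k E (Inr j)"
  proof clarify
    fix i T assume "i \<in> {1..t+1}" "T \<in> missing_completions k n t E i j"
    then have T: "T \<subseteq> Nset_above t n" "card T = k - 1" "insert (Inl i) (insert (Inr j) T) \<notin> E"
      and F: "insert (Inl i) (insert (Inr j) T) \<in> F_edges k n t"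
      using completion_in_F_edges[OF assms(1) _ assms(2,3)] by (auto simp: missing_completions_def)
    have "finite T"
      using T(1) finite_Nset_above by (rule finite_subset)
    moreover have "Inl i \<notin> T" "Inr j \<notin> T"
      using T(1) assms(2) by (auto simp: Nset_above_def)
    ultimately show "insert (Inl i) T \<in> nbhd k (F_edges k n t) (Inr j) - nbhd k E (Inr j)"
      using T assms(1) F by (auto simp: nbhd_def insert_commute)
  qed
  have inj: "inj_on ?\<phi> ?Sg"
  proof (rule inj_onI)
    fix p q assume "p \<in> ?Sg" "q \<in> ?Sg" "?\<phi> p = ?\<phi> q"
    moreover obtain i T i' T' where "p = (i, T)" "q = (i', T')"
      by (cases p, cases q) simp
    ultimately have "insert (Inl i) T = insert (Inl i') T'" "Inl i \<notin> T" "Inl i \<notin> T'"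
      by (auto simp: missing_completions_def Nset_above_def)
    then have "i = i' \<and> T = T'"
      by (auto dest: insert_eq_insertD)
    with \<open>p = (i, T)\<close> \<open>q = (i', T')\<close> show "p = q"
      by simp
  qed
  have "(\<Sum>i\<in>{1..t+1}. card (missing_completions k n t E i j)) = card ?Sg"
    by simp
  also have "\<dots> = card (?\<phi> ` ?Sg)"
    using inj by (simp add: card_image)
  also have "\<dots> \<le> card (nbhd k (F_edges k n t) (Inr j) - nbhd k E (Inr j))"
    using sub by (intro card_mono finite_Diff finite_nbhd_F_edges)
  finally show ?thesis .
qed

lemma sum_card_missing_completions_Inl:
  assumes "k \<ge> 1" "i \<in> {1..t+1}" "t \<le> n"
  shows "(\<Sum>j\<in>{1..t}. card (missing_completions k n t E i j))
           \<le> card (nbhd k (F_edges k n t) (Inl i) - nbhd k E (Inl i))"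
proof -
  let ?Sg = "SIGMA j:{1..t}. missing_completions k n t E i j"
  let ?\<phi> = "\<lambda>(j, T). insert (Inr j) T"
  have sub: "?\<phi> ` ?Sg \<subseteq> nbhd k (F_edges k n t) (Inl i) - nbhd k E (Inl i)"
  proof clarify
    fix j T assume "j \<in> {1..t}" "T \<in> missing_completions k n t E i j"
    then have T: "T \<subseteq> Nset_above t n" "card T = k - 1" "insert (Inl i) (insert (Inr j) T) \<notin> E"
      and F: "insert (Inl i) (insert (Inr j) T) \<in> F_edges k n t"
      using completion_in_F_edges[OF assms(1,2) _ assms(3)] by (auto simp: missing_completions_def)
    have "finite T"
      using T(1) finite_Nset_above by (rule finite_subset)
    moreover have "Inl i \<notin> T" "Inr j \<notin> T"
      using T(1) \<open>j \<in> {1..t}\<close> by (auto simp: Nset_above_def)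
    ultimately show "insert (Inr j) T \<in> nbhd k (F_edges k n t) (Inl i) - nbhd k E (Inl i)"
      using T assms(1) F by (auto simp: nbhd_def)
  qed
  have inj: "inj_on ?\<phi> ?Sg"
  proof (rule inj_onI)
    fix p q assume "p \<in> ?Sg" "q \<in> ?Sg" "?\<phi> p = ?\<phi> q"
    moreover obtain j T j' T' where "p = (j, T)" "q = (j', T')"
      by (cases p, cases q) simp
    ultimately have "insert (Inr j) T = insert (Inr j') T'" "Inr j \<notin> T" "Inr j \<notin> T'"
      by (auto simp: missing_completions_def Nset_above_def)
    then have "j = j' \<and> T = T'"
      by (auto dest: insert_eq_insertD)
    with \<open>p = (j, T)\<close> \<open>q = (j', T')\<close> show "p = q"
      by simp
  qed
  have "(\<Sum>j\<in>{1..t}. card (missing_completions k n t E i j)) = card ?Sg"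
    by simp
  also have "\<dots> = card (?\<phi> ` ?Sg)"
    using inj by (simp add: card_image)
  also have "\<dots> \<le> card (nbhd k (F_edges k n t) (Inl i) - nbhd k E (Inl i))"
    using sub by (intro card_mono finite_Diff finite_nbhd_F_edges)
  finally show ?thesis .
qed

lemma missing_completion_sums_le:
  fixes \<alpha> :: real
  assumes "k \<ge> 1" "t \<le> n" and good: "\<forall>v \<in> Xset t \<union> Nset n. alpha_good \<alpha> k n t E v"
  shows "\<forall>j\<in>{1..t}. (\<Sum>i\<in>{1..t+1}. real (card (missing_completions k n t E i j))) \<le> \<alpha> * real n ^ k"
    and "\<forall>i\<in>{1..t+1}. (\<Sum>j\<in>{1..t}. real (card (missing_completions k n t E i j))) \<le> \<alpha> * real n ^ k"
proof -
  show "\<forall>j\<in>{1..t}. (\<Sum>i\<in>{1..t+1}. real (card (missing_completions k n t E i j))) \<le> \<alpha> * real n ^ k"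
  proof
    fix j assume j: "j \<in> {1..t}"
    have "(\<Sum>i\<in>{1..t+1}. real (card (missing_completions k n t E i j)))
            \<le> real (card (nbhd k (F_edges k n t) (Inr j) - nbhd k E (Inr j)))"
      using sum_card_missing_completions_Inr[OF assms(1) j assms(2), of E]
      by (simp only: of_nat_mono flip: of_nat_sum)
    also have "\<dots> \<le> \<alpha> * real n ^ k"
      using good j assms(2) by (auto simp: alpha_good_def Nset_def)
    finally show "(\<Sum>i\<in>{1..t+1}. real (card (missing_completions k n t E i j))) \<le> \<alpha> * real n ^ k" .
  qed
  show "\<forall>i\<in>{1..t+1}. (\<Sum>j\<in>{1..t}. real (card (missing_completions k n t E i j))) \<le> \<alpha> * real n ^ k"
  proof
    fix i assume i: "i \<in> {1..t+1}"
    have "(\<Sum>j\<in>{1..t}. real (card (missing_completions k n t E i j)))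
            \<le> real (card (nbhd k (F_edges k n t) (Inl i) - nbhd k E (Inl i)))"
      using sum_card_missing_completions_Inl[OF assms(1) i assms(2), of E]
      by (simp only: of_nat_mono flip: of_nat_sum)
    also have "\<dots> \<le> \<alpha> * real n ^ k"
      using good i by (auto simp: alpha_good_def Xset_def)
    finally show "(\<Sum>j\<in>{1..t}. real (card (missing_completions k n t E i j))) \<le> \<alpha> * real n ^ k" .
  qed
qed

lemma exists_disjoint_completions:
  assumes light: "\<forall>j\<in>{1..t}. real (card (missing_completions k n t E (f j) j)) \<le> \<gamma>"
    and room: "\<forall>U. U \<subseteq> Nset_above t n \<and> card U \<le> (k - 1) * (t - 1)
                 \<longrightarrow> \<gamma> < real (card (Nset_above t n - Z - U) choose (k - 1))"
  shows "\<exists>g. (\<forall>j\<in>{1..t}. g j \<subseteq> Nset_above t n - Z \<and> card (g j) = k - 1 \<and>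
                            insert (Inl (f j)) (insert (Inr j) (g j)) \<in> E) \<and>
             (\<forall>j\<in>{1..t}. \<forall>j'\<in>{1..t}. j \<noteq> j' \<longrightarrow> g j \<inter> g j' = {})"
proof (rule exists_disjoint_choice)
  show "\<forall>j\<in>{1..t}. \<forall>U. U \<subseteq> Nset_above t n - Z \<and> card U \<le> (k - 1) * (card {1..t} - 1) \<longrightarrow>
          (\<exists>T. T \<subseteq> Nset_above t n - Z - U \<and> card T = k - 1 \<and> insert (Inl (f j)) (insert (Inr j) T) \<in> E)"
  proof (intro ballI allI impI)
    fix j U
    assume j: "j \<in> {1..t}" and U: "U \<subseteq> Nset_above t n - Z \<and> card U \<le> (k - 1) * (card {1..t} - 1)"
    let ?C = "{T. T \<subseteq> Nset_above t n - Z - U \<and> card T = k - 1}"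
    have "U \<subseteq> Nset_above t n" "card U \<le> (k - 1) * (t - 1)"
      using U by auto
    then have "\<gamma> < real (card (Nset_above t n - Z - U) choose (k - 1))"
      by (rule room[rule_format, OF conjI])
    also have "card (Nset_above t n - Z - U) choose (k - 1) = card ?C"
      by (intro n_subsets[symmetric]) simp
    finally have "\<gamma> < real (card ?C)" .
    moreover have "real (card (missing_completions k n t E (f j) j)) \<le> \<gamma>"
      using light j by blast
    ultimately have "\<not> card ?C \<le> card (missing_completions k n t E (f j) j)"
      by linarith
    then have "\<not> ?C \<subseteq> missing_completions k n t E (f j) j"
      using card_mono[OF finite_missing_completions] by (rule contrapos_nn)
    then show "\<exists>T. T \<subseteq> Nset_above t n - Z - U \<and> card T = k - 1 \<and> insert (Inl (f j)) (insert (Inr j) T) \<in> E"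
      by (auto simp: missing_completions_def)
  qed
qed simp

lemma matching_of_completions:
  assumes "inj_on f {1..t}" "Z \<subseteq> Nset_above t n"
    and g: "\<forall>j\<in>{1..t}. g j \<subseteq> Nset_above t n - Z \<and> insert (Inl (f j)) (insert (Inr j) (g j)) \<in> E"
      "\<forall>j\<in>{1..t}. \<forall>j'\<in>{1..t}. j \<noteq> j' \<longrightarrow> g j \<inter> g j' = {}"
  shows "\<exists>M. matching E M \<and> card M = t \<and> (\<forall>e\<in>M. e \<inter> Z = {} \<and> (\<forall>i. Inl i \<in> e \<longrightarrow> i \<in> f ` {1..t}))"
proof -
  define edge where "edge j = insert (Inl (f j)) (insert (Inr j) (g j))" for j
  have g_above: "g j \<subseteq> Inr ` {t+1..n}" "g j \<inter> Z = {}" if "j \<in> {1..t}" for j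
    using g(1) that by (auto simp: Nset_above_def)
  have disjoint: "edge j \<inter> edge j' = {}" if j: "j \<in> {1..t}" "j' \<in> {1..t}" "j \<noteq> j'" for j j'
  proof -
    have "f j \<noteq> f j'"
      using inj_onD[OF assms(1)] j by blast
    moreover have "g j \<inter> g j' = {}"
      using g(2) j by blast
    ultimately show ?thesis
      using g_above(1)[OF j(1)] g_above(1)[OF j(2)] j by (auto simp: edge_def)
  qed
  have "inj_on edge {1..t}"
  proof (rule inj_onI)
    fix j j' assume "j \<in> {1..t}" "j' \<in> {1..t}" "edge j = edge j'"
    then show "j = j'"
      using disjoint[of j j'] by (auto simp: edge_def)
  qed
  moreover have "matching E (edge ` {1..t})"
    unfolding matching_def
  proof (intro conjI ballI impI)
    show "edge ` {1..t} \<subseteq> E"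
      using g(1) by (auto simp: edge_def)
    show "finite (edge ` {1..t})"
      by simp
    fix e e' assume "e \<in> edge ` {1..t}" "e' \<in> edge ` {1..t}" "e \<noteq> e'"
    then obtain j j' where "j \<in> {1..t}" "j' \<in> {1..t}" "j \<noteq> j'" "e = edge j" "e' = edge j'"
      by blast
    then show "e \<inter> e' = {}"
      using disjoint by blast
  qed
  moreover have "e \<inter> Z = {} \<and> (\<forall>i. Inl i \<in> e \<longrightarrow> i \<in> f ` {1..t})" if e: "e \<in> edge ` {1..t}" for e
  proof -
    obtain j where j: "j \<in> {1..t}" "e = edge j"
      using e by blast
    have "Inl (f j) \<notin> Z" "Inr j \<notin> Z"
      using assms(2) j(1) by (auto simp: Nset_above_def)
    then show ?thesis
      using j g_above(1,2)[OF j(1)] by (auto simp: edge_def)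
  qed
  ultimately show ?thesis
    by (intro exI[of _ "edge ` {1..t}"]) (simp add: card_image)
qed

lemma exists_matching_avoiding:
  assumes B: "B \<subseteq> {1..t+1}" "t \<le> card B" and "Z \<subseteq> Nset_above t n"
    and "\<gamma> > 0" "3 * (S / \<gamma>) < real t"
    and X_sums: "\<forall>j\<in>{1..t}. (\<Sum>i\<in>{1..t+1}. real (card (missing_completions k n t E i j))) \<le> S"
    and N_sums: "\<forall>i\<in>{1..t+1}. (\<Sum>j\<in>{1..t}. real (card (missing_completions k n t E i j))) \<le> S"
    and room: "\<forall>U. U \<subseteq> Nset_above t n \<and> card U \<le> (k - 1) * (t - 1)
                 \<longrightarrow> \<gamma> < real (card (Nset_above t n - Z - U) choose (k - 1))"
  shows "\<exists>M. matching E M \<and> card M = t \<and> (\<forall>e\<in>M. e \<inter> Z = {} \<and> (\<forall>i. Inl i \<in> e \<longrightarrow> i \<in> B))"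
proof -
  have "finite B"
    using B(1) by (rule finite_subset) simp
  have "\<exists>f. inj_on f {1..t} \<and> f ` {1..t} \<subseteq> B \<and>
            (\<forall>j\<in>{1..t}. real (card (missing_completions k n t E (f j) j)) \<le> \<gamma>)"
  proof (rule exists_inj_light_pairs[where w = "\<lambda>j i. card (missing_completions k n t E i j)"])
    show "3 * (S / \<gamma>) < real (card B)"
      using B(2) \<open>3 * (S / \<gamma>) < real t\<close> by linarith
    show "\<forall>j\<in>{1..t}. (\<Sum>i\<in>B. real (card (missing_completions k n t E i j))) \<le> S"
    proof
      fix j assume "j \<in> {1..t}"
      have "(\<Sum>i\<in>B. real (card (missing_completions k n t E i j)))
              \<le> (\<Sum>i\<in>{1..t+1}. real (card (missing_completions k n t E i j)))"
        using B(1) by (intro sum_mono2) auto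
      also have "\<dots> \<le> S"
        using X_sums \<open>j \<in> {1..t}\<close> by blast
      finally show "(\<Sum>i\<in>B. real (card (missing_completions k n t E i j))) \<le> S" .
    qed
    show "\<forall>i\<in>B. (\<Sum>j\<in>{1..t}. real (card (missing_completions k n t E i j))) \<le> S"
      using N_sums B(1) by blast
  qed (use \<open>finite B\<close> B(2) \<open>\<gamma> > 0\<close> in auto)
  then obtain f where f: "inj_on f {1..t}" "f ` {1..t} \<subseteq> B"
    "\<forall>j\<in>{1..t}. real (card (missing_completions k n t E (f j) j)) \<le> \<gamma>"
    by blast
  obtain g where "\<forall>j\<in>{1..t}. g j \<subseteq> Nset_above t n - Z \<and> card (g j) = k - 1 \<and>
                               insert (Inl (f j)) (insert (Inr j) (g j)) \<in> E"
    "\<forall>j\<in>{1..t}. \<forall>j'\<in>{1..t}. j \<noteq> j' \<longrightarrow> g j \<inter> g j' = {}"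
    using exists_disjoint_completions[OF f(3) room] by blast
  then obtain M where M: "matching E M" "card M = t"
    "\<forall>e\<in>M. e \<inter> Z = {} \<and> (\<forall>i. Inl i \<in> e \<longrightarrow> i \<in> f ` {1..t})"
    using matching_of_completions[OF f(1) \<open>Z \<subseteq> Nset_above t n\<close>, of g E] by blast
  have "\<forall>e\<in>M. e \<inter> Z = {} \<and> (\<forall>i. Inl i \<in> e \<longrightarrow> i \<in> B)"
    using M(3) f(2) by (metis subsetD)
  with M(1,2) show ?thesis
    by blast
qed

lemma matching_number_gt_if_edge_outside_F:
  assumes "one_k_partite k (Xset t) (Nset n) E" "finite E" "e \<in> E" "e \<notin> F_edges k n t"
    and avoid: "\<And>B Z. B \<subseteq> {1..t+1} \<Longrightarrow> t \<le> card B \<Longrightarrow> Z \<subseteq> Nset_above t n \<Longrightarrow> card Z \<le> k \<Longrightarrow>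
                  \<exists>M. matching E M \<and> card M = t \<and> (\<forall>e\<in>M. e \<inter> Z = {} \<and> (\<forall>i. Inl i \<in> e \<longrightarrow> i \<in> B))"
  shows "t < matching_number E"
proof -
  obtain a S where a: "a \<in> {1..t+1}" and e: "e = insert (Inl a) S" and S: "S \<subseteq> Nset n" "card S = k"
    using assms(1,3) by (rule one_k_partite_edgeE)
  have "S \<inter> Inr ` {1..t} = {}"
    using assms(4) a S unfolding e F_edges_def by blast
  have "S \<subseteq> Nset_above t n"
  proof
    fix x assume "x \<in> S"
    then obtain m where "m \<in> {1..n}" "x = Inr m"
      using S(1) by (auto simp: Nset_def)
    moreover have "m \<notin> {1..t}"
      using \<open>S \<inter> Inr ` {1..t} = {}\<close> \<open>x \<in> S\<close> calculation(2) by blast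
    ultimately show "x \<in> Nset_above t n"
      by (auto simp: Nset_above_def)
  qed
  moreover have "{1..t+1} - {a} \<subseteq> {1..t+1}" "t \<le> card ({1..t+1} - {a})"
    using a by auto
  ultimately obtain M where M: "matching E M" "card M = t"
    "\<forall>e'\<in>M. e' \<inter> S = {} \<and> (\<forall>i. Inl i \<in> e' \<longrightarrow> i \<in> {1..t+1} - {a})"
    using avoid S(2) by blast
  then have "\<forall>e'\<in>M. e \<inter> e' = {}" "e \<notin> M"
    unfolding e by auto
  moreover have "finite M"
    using M(1) by (simp add: matching_def)
  ultimately have "card (insert e M) = t + 1"
    using M(2) by simp
  moreover have "matching E (insert e M)"
    using M(1) assms(3) \<open>\<forall>e'\<in>M. e \<inter> e' = {}\<close> by (rule matching_insert)
  ultimately show ?thesis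
    using card_le_matching_number[OF assms(2)] by fastforce
qed

lemma choose_remaining_ge_power:
  fixes \<zeta> :: real
  assumes "k \<ge> 1" "t > 0" "\<zeta> > 0" "real k * (real t + 1) < (1 - \<zeta>) * real n"
    and Z: "Z \<subseteq> Nset_above t n" "card Z \<le> k"
    and U: "U \<subseteq> Nset_above t n" "card U \<le> (k - 1) * (t - 1)"
  shows "(\<zeta> * real n / real k) ^ (k - 1) \<le> real (card (Nset_above t n - Z - U) choose (k - 1))"
proof -
  let ?m = "card (Nset_above t n - Z - U)"
  have "finite Z" "finite U"
    using Z(1) U(1) by (auto intro: finite_subset)
  have "card (Nset_above t n) - card Z \<le> card (Nset_above t n - Z)"
    using \<open>finite Z\<close> by (rule diff_card_le_card_Diff)
  moreover have "card (Nset_above t n - Z) - card U \<le> ?m"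
    using \<open>finite U\<close> by (rule diff_card_le_card_Diff)
  ultimately have "real n - real t - real (card Z) - real (card U) \<le> real ?m"
    by simp
  moreover have "real (card U) \<le> (real k - 1) * (real t - 1)"
  proof -
    have "real ((k - 1) * (t - 1)) = (real k - 1) * (real t - 1)"
      using assms(1,2) by (simp add: of_nat_diff)
    with U(2) show ?thesis
      by (metis of_nat_le_iff)
  qed
  ultimately have "\<zeta> * real n + real k - 1 < real ?m"
    using Z(2) assms(4) by (simp add: algebra_simps)
  moreover have "0 \<le> \<zeta> * real n"
    using assms(3) by simp
  ultimately have "\<zeta> * real n \<le> real ?m" "real (k - 1) \<le> real ?m"
    using assms(1) by (simp_all add: of_nat_diff)
  then have "\<zeta> * real n \<le> real ?m" "k - 1 \<le> ?m"
    by simp_all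
  then show ?thesis
    using binomial_ge_power_div_Suc[of "\<zeta> * real n" ?m "k - 1"] assms(1,3) by simp
qed

text \<open>Pairs with at most this many missing completions are the light ones; twice it is the
  lower bound \<open>(\<zeta> n / k)\<^bsup>k-1\<^esup>\<close> for the completions still available.\<close>
definition light_bound :: "nat \<Rightarrow> real \<Rightarrow> nat \<Rightarrow> real" where
  "light_bound k \<zeta> n = real n ^ (k - 1) / (2 * (real k / \<zeta>) ^ (k - 1))"

lemma light_bound_pos: "k \<ge> 1 \<Longrightarrow> 0 < \<zeta> \<Longrightarrow> n > 0 \<Longrightarrow> light_bound k \<zeta> n > 0"
  by (simp add: light_bound_def)

lemma heavy_pairs_lt:
  fixes \<alpha> \<zeta> :: real
  assumes "k \<ge> 1" "0 < \<zeta>" "n > 0" "\<alpha> * (12 * real k ^ 3 * (real k / \<zeta>) ^ (k - 1)) < 1"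
    and "real n / (2 * real k ^ 3) \<le> real t"
  shows "3 * (\<alpha> * real n ^ k / light_bound k \<zeta> n) < real t"
proof -
  define c where "c = (real k / \<zeta>) ^ (k - 1)"
  have "c > 0"
    using assms(1,2) by (simp add: c_def)
  have "real n ^ k = real n * real n ^ (k - 1)"
    using assms(1) by (cases k) simp_all
  then have "3 * (\<alpha> * real n ^ k / light_bound k \<zeta> n) * (2 * real k ^ 3)
               = \<alpha> * (12 * real k ^ 3 * c) * real n"
    using assms(3) \<open>c > 0\<close> by (simp add: light_bound_def c_def algebra_simps)
  also have "\<dots> < real n"
    using assms(3,4) by (simp add: c_def)
  finally have "3 * (\<alpha> * real n ^ k / light_bound k \<zeta> n) < real n / (2 * real k ^ 3)"
    using assms(1) by (intro pos_less_divide_eq[THEN iffD2]) simp_all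
  with assms(5) show ?thesis
    by linarith
qed

lemma light_bound_lt_choose:
  fixes \<zeta> :: real
  assumes "k \<ge> 1" "t > 0" "\<zeta> > 0" "n > 0" "real k * (real t + 1) < (1 - \<zeta>) * real n"
    and "Z \<subseteq> Nset_above t n" "card Z \<le> k" "U \<subseteq> Nset_above t n" "card U \<le> (k - 1) * (t - 1)"
  shows "light_bound k \<zeta> n < real (card (Nset_above t n - Z - U) choose (k - 1))"
proof -
  have "\<zeta> * real n / real k = real n / (real k / \<zeta>)"
    by simp
  then have double: "2 * light_bound k \<zeta> n = (\<zeta> * real n / real k) ^ (k - 1)"
    using assms(1,3) by (simp add: light_bound_def power_divide power_mult_distrib mult.commute)
  have "light_bound k \<zeta> n < 2 * light_bound k \<zeta> n"
    using light_bound_pos[OF assms(1,3,4)] by simp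
  also have "\<dots> = (\<zeta> * real n / real k) ^ (k - 1)"
    by (fact double)
  also have "\<dots> \<le> real (card (Nset_above t n - Z - U) choose (k - 1))"
    by (rule choose_remaining_ge_power[OF assms(1,2,3,5-9)])
  finally show ?thesis .
qed

lemma avoiding_matchings_if_alpha_good:
  fixes \<alpha> \<zeta> :: real
  assumes "k \<ge> 1" "0 < \<zeta>" "\<alpha> * (12 * real k ^ 3 * (real k / \<zeta>) ^ (k - 1)) < 1"
    and "t > 0" "real n / (2 * real k ^ 3) \<le> real t" "real k * (real t + 1) < (1 - \<zeta>) * real n"
    and good: "\<forall>v \<in> Xset t \<union> Nset n. alpha_good \<alpha> k n t E v"
    and B: "B \<subseteq> {1..t+1}" "t \<le> card B" and Z: "Z \<subseteq> Nset_above t n" "card Z \<le> k"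
  shows "\<exists>M. matching E M \<and> card M = t \<and> (\<forall>e\<in>M. e \<inter> Z = {} \<and> (\<forall>i. Inl i \<in> e \<longrightarrow> i \<in> B))"
proof -
  have "real t + 1 \<le> real k * (real t + 1)"
    using assms(1) by simp
  also have "\<dots> < (1 - \<zeta>) * real n"
    by (fact assms(6))
  also have "\<dots> \<le> real n"
    using assms(2) by (simp add: algebra_simps)
  finally have "t \<le> n" "n > 0"
    by simp_all
  have room: "\<forall>U. U \<subseteq> Nset_above t n \<and> card U \<le> (k - 1) * (t - 1)
               \<longrightarrow> light_bound k \<zeta> n < real (card (Nset_above t n - Z - U) choose (k - 1))"
    using light_bound_lt_choose[OF assms(1,4,2) \<open>n > 0\<close> assms(6) Z] by blast
  show ?thesis
    by (rule exists_matching_avoiding[OF B Z(1) light_bound_pos[OF assms(1,2) \<open>n > 0\<close>]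
          heavy_pairs_lt[OF assms(1,2) \<open>n > 0\<close> assms(3,5)]
          missing_completion_sums_le[OF assms(1) \<open>t \<le> n\<close> good] room])
qed

theorem lemma4p1:
  fixes k :: nat and \<zeta> :: real
  assumes "k \<ge> 1" and "0 < \<zeta>" and "\<zeta> < 1"
  shows "\<exists>\<alpha>0 > 0. \<forall>\<alpha> n t E.
     0 < \<alpha> \<and> \<alpha> < \<alpha>0 \<and> n > 0 \<and> t > 0 \<and>
     real n \<ge> 8 * real k ^ 4 \<and> real t \<ge> real n / (2 * real k ^ 3) \<and>
     real t + 1 < (1 - \<zeta>) * real n / real k \<and>
     one_k_partite k (Xset t) (Nset n) E \<and>
     (\<forall>v \<in> Xset t \<union> Nset n. alpha_good \<alpha> k n t E v)
     \<longrightarrow> matching_number E \<ge> t \<and>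
         (matching_number E = t \<longrightarrow> E \<subseteq> F_edges k n t)"
proof (intro exI[of _ "1 / (12 * real k ^ 3 * (real k / \<zeta>) ^ (k - 1))"] conjI allI impI)
  let ?c = "12 * real k ^ 3 * (real k / \<zeta>) ^ (k - 1)"
  have "?c > 0"
    using assms(1,2) by simp
  then show "1 / ?c > 0"
    by simp
  fix \<alpha> :: real and n t :: nat and E
  assume hyps: "0 < \<alpha> \<and> \<alpha> < 1 / ?c \<and> n > 0 \<and> t > 0 \<and>
     real n \<ge> 8 * real k ^ 4 \<and> real t \<ge> real n / (2 * real k ^ 3) \<and>
     real t + 1 < (1 - \<zeta>) * real n / real k \<and>
     one_k_partite k (Xset t) (Nset n) E \<and>
     (\<forall>v \<in> Xset t \<union> Nset n. alpha_good \<alpha> k n t E v)"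
  then have "\<alpha> * ?c < 1" "real k * (real t + 1) < (1 - \<zeta>) * real n"
    using \<open>?c > 0\<close> assms(1) by (simp_all add: pos_less_divide_eq mult.commute)
  then have avoid: "\<exists>M. matching E M \<and> card M = t \<and> (\<forall>e\<in>M. e \<inter> Z = {} \<and> (\<forall>i. Inl i \<in> e \<longrightarrow> i \<in> B))"
    if "B \<subseteq> {1..t+1}" "t \<le> card B" "Z \<subseteq> Nset_above t n" "card Z \<le> k" for B Z
    using avoiding_matchings_if_alpha_good[OF assms(1,2)] hyps that by blast
  have "finite E"
    using hyps by (intro finite_edges_one_k_partite) (auto simp: Xset_def Nset_def)
  obtain M where "matching E M" "card M = t"
    using avoid[of "{1..t+1}" "{}"] by auto
  then show "t \<le> matching_number E"
    using card_le_matching_number[OF \<open>finite E\<close>] by blast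
  show "E \<subseteq> F_edges k n t" if "matching_number E = t"
    using matching_number_gt_if_edge_outside_F[OF _ \<open>finite E\<close> _ _ avoid] hyps that by force
qed

end
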